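(* Let $\mathcal A$ be a topological algebra with hypocontinuous multiplication such that $\Omega(\mathcal A)$ separates the points of $\mathcal A^{**}$. Then every $\sigma(\mathcal A^{**},\mathcal A^* )$-cluster point in $\mathcal A^{**}$ of the set of idempotents of $J(\mathcal A)$ is again an idempotent with respect to both Arens products, i.e. if $a_i\in\mathcal A$ with $a_i^2=a_i$ and $J(a_i)\to u$ in $\sigma(\mathcal A^{**},\mathcal A^* )$, then $u\square u=u$ and $u\diamond u=u$.
   Context: $\Omega(\mathcal A)\subseteq\mathcal A^*$ denotes the set of continuous nonzero multiplicative linear functionals on $\mathcal A$; "separates points of $\mathcal A^{**}$" means for $u\ne v$ in $\mathcal A^{**}$ there is $f\in\Omega(\mathcal A)$ with $u(f)\ne v(f)$. $\mathcal A^*,\mathcal A^{**}$ carry strong dual topologies and $J:\mathcal A\to\mathcal A^{**}$ is the evaluation map. Multiplication is hypocontinuous: for every bounded $B\subseteq\mathcal A$ and $0$-neighbourhood $W$ there is a $0$-neighbourhood $V$ with $BV\subseteq W$ and $VB\subseteq W$. Arens products: for $f\in\mathcal A^*$, $a,b\in\mathcal A$, $f_a(b)=f(ab)$, ${}_af(b)=f(ba)$; for $u\in\mathcal A^{**}$, $f_u(b)=u({}_bf)$, ${}_uf(b)=u(f_b)$; $(u\square v)(f)=u({}_vf)$, $(u\diamond v)(f)=v(f_u)$. *)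

theory Defs
  imports "HOL-Analysis.Analysis"
begin

class complex_algebra = ring +
  fixes scaleC :: "complex \<Rightarrow> 'a \<Rightarrow> 'a" (infixr "*\<^sub>C" 75)
  assumes scaleC_add_right: "c *\<^sub>C (x + y) = c *\<^sub>C x + c *\<^sub>C y"
    and scaleC_add_left: "(c + d) *\<^sub>C x = c *\<^sub>C x + d *\<^sub>C x"
    and scaleC_scaleC: "c *\<^sub>C (d *\<^sub>C x) = (c * d) *\<^sub>C x"
    and scaleC_one: "1 *\<^sub>C x = x"
    and mult_scaleC_left: "(c *\<^sub>C x) * y = c *\<^sub>C (x * y)"
    and mult_scaleC_right: "x * (c *\<^sub>C y) = c *\<^sub>C (x * y)"

definition topological_algebra :: "('a::{complex_algebra, topological_space}) itself \<Rightarrow> bool" where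
  "topological_algebra _ \<longleftrightarrow>
     continuous_on UNIV (\<lambda>p::'a \<times> 'a. fst p + snd p) \<and>
     continuous_on UNIV (\<lambda>p::complex \<times> 'a. fst p *\<^sub>C snd p) \<and>
     (\<forall>a::'a. continuous_on UNIV (\<lambda>x. a * x) \<and> continuous_on UNIV (\<lambda>x. x * a))"

definition zero_nbhd :: "'a::{zero,topological_space} set \<Rightarrow> bool" where
  "zero_nbhd V \<longleftrightarrow> (\<exists>U. open U \<and> 0 \<in> U \<and> U \<subseteq> V)"

definition tvs_bounded :: "'a::{complex_algebra, topological_space} set \<Rightarrow> bool" where
  "tvs_bounded B \<longleftrightarrow> (\<forall>V. zero_nbhd V \<longrightarrow>
      (\<exists>s>0. \<forall>t::real. t > s \<longrightarrow> B \<subseteq> (\<lambda>x. complex_of_real t *\<^sub>C x) ` V))"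

definition hypocontinuous_mult :: "('a::{complex_algebra, topological_space}) itself \<Rightarrow> bool" where
  "hypocontinuous_mult _ \<longleftrightarrow> (\<forall>(B::'a set) W. tvs_bounded B \<and> zero_nbhd W \<longrightarrow>
      (\<exists>V. zero_nbhd V \<and> (\<forall>b\<in>B. \<forall>v\<in>V. b * v \<in> W \<and> v * b \<in> W)))"

definition clinear_fun :: "('a::complex_algebra \<Rightarrow> complex) \<Rightarrow> bool" where
  "clinear_fun f \<longleftrightarrow> (\<forall>x y. f (x + y) = f x + f y) \<and> (\<forall>c x. f (c *\<^sub>C x) = c * f x)"

definition dual_space :: "('a::{complex_algebra, topological_space} \<Rightarrow> complex) set" where
  "dual_space = {f. clinear_fun f \<and> continuous_on UNIV f}"

text \<open>Continuity of a functional on \<open>A*\<close> with respect to the strong dual topology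
  (uniform convergence on bounded sets), written via its standard neighbourhood base.\<close>
definition strong_continuous :: "(('a::{complex_algebra, topological_space} \<Rightarrow> complex) \<Rightarrow> complex) \<Rightarrow> bool" where
  "strong_continuous u \<longleftrightarrow> (\<forall>f\<in>dual_space. \<forall>e>0. \<exists>B d. tvs_bounded B \<and> d > 0 \<and>
      (\<forall>g\<in>dual_space. (\<forall>b\<in>B. cmod (g b - f b) < d) \<longrightarrow> cmod (u g - u f) < e))"

text \<open>The bidual \<open>A**\<close>: strongly continuous linear functionals on \<open>A*\<close>
  (only their values on \<open>A*\<close> are relevant).\<close>
definition bidual_space :: "(('a::{complex_algebra, topological_space} \<Rightarrow> complex) \<Rightarrow> complex) set" where
  "bidual_space = {u. (\<forall>f\<in>dual_space. \<forall>g\<in>dual_space. u (\<lambda>x. f x + g x) = u f + u g) \<and>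
                      (\<forall>f\<in>dual_space. \<forall>c. u (\<lambda>x. c * f x) = c * u f) \<and>
                      strong_continuous u}"

definition character_space :: "('a::{complex_algebra, topological_space} \<Rightarrow> complex) set" where
  "character_space = {f \<in> dual_space. (\<exists>x. f x \<noteq> 0) \<and> (\<forall>x y. f (x * y) = f x * f y)}"

definition separates_bidual :: "('a::{complex_algebra, topological_space}) itself \<Rightarrow> bool" where
  "separates_bidual _ \<longleftrightarrow> (\<forall>u\<in>(bidual_space :: (('a \<Rightarrow> complex) \<Rightarrow> complex) set). \<forall>v\<in>bidual_space.
      (\<exists>f\<in>dual_space. u f \<noteq> v f) \<longrightarrow> (\<exists>\<phi>\<in>character_space. u \<phi> \<noteq> v \<phi>))"

text \<open>Arens products: \<open>(u \<box> v)(f) = u(\<^sub>vf)\<close> with \<open>\<^sub>vf(b) = v(f\<^sub>b)\<close>, \<open>f\<^sub>b(c) = f(bc)\<close>;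
  \<open>(u \<diamond> v)(f) = v(f\<^sub>u)\<close> with \<open>f\<^sub>u(b) = u(\<^sub>bf)\<close>, \<open>\<^sub>bf(c) = f(cb)\<close>.\<close>
definition arens_first :: "(('a::times \<Rightarrow> complex) \<Rightarrow> complex) \<Rightarrow> (('a \<Rightarrow> complex) \<Rightarrow> complex) \<Rightarrow> ('a \<Rightarrow> complex) \<Rightarrow> complex" where
  "arens_first u v f = u (\<lambda>b. v (\<lambda>c. f (b * c)))"

definition arens_second :: "(('a::times \<Rightarrow> complex) \<Rightarrow> complex) \<Rightarrow> (('a \<Rightarrow> complex) \<Rightarrow> complex) \<Rightarrow> ('a \<Rightarrow> complex) \<Rightarrow> complex" where
  "arens_second u v f = v (\<lambda>b. u (\<lambda>c. f (c * b)))"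

end

theory Submission
  imports Defs
begin

text \<open>For a character \<open>\<phi>\<close>, the numbers \<open>\<phi>(a\<^sub>i)\<close> are idempotent and converge to \<open>u(\<phi>)\<close>,
  so \<open>u(\<phi>)\<^sup>2 = u(\<phi>)\<close>. Since \<open>\<phi>\<close> is multiplicative, \<open>(u \<box> u)(\<phi>) = u(\<phi>)\<^sup>2\<close>, and likewise
  for \<open>\<diamond>\<close>. Hypocontinuity of the multiplication is what makes \<open>u \<box> u\<close> and \<open>u \<diamond> u\<close>
  elements of \<open>A**\<close>: it makes \<open>\<^sub>uf : b \<mapsto> u(f\<^sub>b)\<close> continuous at \<open>0\<close>, and products of bounded
  sets bounded. As they agree with \<open>u\<close> on \<open>\<Omega>(A)\<close>, which separates \<open>A**\<close>, they equal \<open>u\<close>.\<close>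

lemma clinear_fun_zero: "clinear_fun f \<Longrightarrow> f 0 = 0"
  unfolding clinear_fun_def by (metis add_cancel_right_right)

lemma clinear_fun_diff: "clinear_fun f \<Longrightarrow> f (x - y) = f x - f y"
  unfolding clinear_fun_def by (metis eq_diff_eq)

lemma dual_space_zero: "(\<lambda>x. 0) \<in> dual_space"
  unfolding dual_space_def clinear_fun_def by auto

lemma dual_space_diff:
  "f \<in> dual_space \<Longrightarrow> g \<in> dual_space \<Longrightarrow> (\<lambda>x. f x - g x) \<in> dual_space"
  unfolding dual_space_def clinear_fun_def
  by (auto simp: algebra_simps intro: continuous_on_diff)

lemma bidual_space_add:
  "u \<in> bidual_space \<Longrightarrow> f \<in> dual_space \<Longrightarrow> g \<in> dual_space \<Longrightarrow> u (\<lambda>x. f x + g x) = u f + u g"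
  unfolding bidual_space_def by blast

lemma bidual_space_scale:
  "u \<in> bidual_space \<Longrightarrow> f \<in> dual_space \<Longrightarrow> u (\<lambda>x. c * f x) = c * u f"
  unfolding bidual_space_def by blast

lemma bidual_space_zero: "u \<in> bidual_space \<Longrightarrow> u (\<lambda>x. 0) = 0"
  using bidual_space_scale[OF _ dual_space_zero, of u 0] by simp

lemma bidual_space_small_on_bounded:
  assumes "u \<in> bidual_space" "e > 0"
  shows "\<exists>B d. tvs_bounded B \<and> d > 0 \<and> (\<forall>h\<in>dual_space. (\<forall>b\<in>B. cmod (h b) < d) \<longrightarrow> cmod (u h) < e)"
  using assms bidual_space_zero[OF assms(1)] dual_space_zero
  unfolding bidual_space_def strong_continuous_def by fastforce

lemma strong_continuousI_at_zero:
  assumes add: "\<And>f g. f \<in> dual_space \<Longrightarrow> g \<in> dual_space \<Longrightarrow> T (\<lambda>x. f x + g x) = T f + T g"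
    and small: "\<And>e. e > 0 \<Longrightarrow> \<exists>B d. tvs_bounded B \<and> d > 0 \<and>
      (\<forall>h\<in>dual_space. (\<forall>b\<in>B. cmod (h b) < d) \<longrightarrow> cmod (T h) < e)"
  shows "strong_continuous T"
  unfolding strong_continuous_def
proof (intro ballI allI impI)
  fix f :: "'a \<Rightarrow> complex" and e :: real
  assume f: "f \<in> dual_space" and "e > 0"
  then obtain B d where "tvs_bounded B" "d > 0"
    and Bd: "\<forall>h\<in>dual_space. (\<forall>b\<in>B. cmod (h b) < d) \<longrightarrow> cmod (T h) < e"
    using small by blast
  moreover have "cmod (T g - T f) < e" if g: "g \<in> dual_space" "\<forall>b\<in>B. cmod (g b - f b) < d" for g
  proof -
    have "T g = T (\<lambda>x. g x - f x) + T f"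
      using add[OF dual_space_diff[OF g(1) f] f] by simp
    then show ?thesis using Bd dual_space_diff[OF g(1) f] g(2) by simp
  qed
  ultimately show "\<exists>B d. tvs_bounded B \<and> d > 0 \<and>
      (\<forall>g\<in>dual_space. (\<forall>b\<in>B. cmod (g b - f b) < d) \<longrightarrow> cmod (T g - T f) < e)"
    by blast
qed

lemma continuous_on_translation:
  assumes "topological_algebra TYPE('a::{complex_algebra, topological_space})"
  shows "continuous_on UNIV (\<lambda>x::'a. x + c)"
proof -
  have "continuous_on UNIV (\<lambda>p::'a \<times> 'a. fst p + snd p)"
    using assms unfolding topological_algebra_def by blast
  then have "continuous_on UNIV ((\<lambda>p::'a \<times> 'a. fst p + snd p) \<circ> (\<lambda>x. (x, c)))"
    by (intro continuous_on_compose continuous_intros) (auto intro: continuous_on_subset)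
  then show ?thesis by (simp add: o_def)
qed

lemma continuous_on_clinear_at_zero:
  fixes g :: "'a::{complex_algebra, topological_space} \<Rightarrow> complex"
  assumes "topological_algebra TYPE('a)" and g: "clinear_fun g"
    and small: "\<And>e. e > 0 \<Longrightarrow> \<exists>V. zero_nbhd V \<and> (\<forall>v\<in>V. cmod (g v) < e)"
  shows "continuous_on UNIV g"
  unfolding continuous_on_topological
proof (intro ballI allI impI)
  fix x0 :: 'a and S :: "complex set"
  assume "open S" "g x0 \<in> S"
  then obtain e where "e > 0" and e: "ball (g x0) e \<subseteq> S" by (meson openE)
  then obtain V where "zero_nbhd V" and V: "\<forall>v\<in>V. cmod (g v) < e" using small by blast
  then obtain U where U: "open U" "0 \<in> U" "U \<subseteq> V" unfolding zero_nbhd_def by blast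
  define A where "A = (\<lambda>x. x + - x0) -` U"
  have "open A"
    unfolding A_def by (rule open_vimage[OF U(1) continuous_on_translation[OF assms(1)]])
  moreover have "x0 \<in> A" using U unfolding A_def by simp
  moreover have "g x \<in> S" if "x \<in> A" for x
  proof -
    have "cmod (g (x - x0)) < e" using that U V unfolding A_def by auto
    then show ?thesis using e clinear_fun_diff[OF g] by (auto simp: dist_norm norm_minus_commute)
  qed
  ultimately show "\<exists>A. open A \<and> x0 \<in> A \<and> (\<forall>x\<in>UNIV. x \<in> A \<longrightarrow> g x \<in> S)" by blast
qed

lemma tendsto_idempotent:
  fixes z :: "'i \<Rightarrow> 'b::{t2_space, topological_semigroup_mult}"
  assumes "(z \<longlongrightarrow> w) F" "F \<noteq> bot" "\<And>i. z i * z i = z i"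
  shows "w * w = w"
proof -
  have "((\<lambda>i. z i * z i) \<longlongrightarrow> w * w) F" by (intro tendsto_mult assms(1))
  then have "(z \<longlongrightarrow> w * w) F" using assms(3) by simp
  then show ?thesis using assms(1,2) tendsto_unique by blast
qed

definition arens_product ::
  "('a \<Rightarrow> 'a \<Rightarrow> 'a) \<Rightarrow> (('a \<Rightarrow> complex) \<Rightarrow> complex) \<Rightarrow> (('a \<Rightarrow> complex) \<Rightarrow> complex) \<Rightarrow> ('a \<Rightarrow> complex) \<Rightarrow> complex"
  where "arens_product m u v f = u (\<lambda>b. v (\<lambda>c. f (m b c)))"

lemma arens_first_eq_arens_product: "arens_first u v = arens_product (*) u v"
  by (simp add: fun_eq_iff arens_first_def arens_product_def)

lemma arens_second_eq_arens_product: "arens_second u v = arens_product (\<lambda>x y. y * x) v u"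
  by (simp add: fun_eq_iff arens_second_def arens_product_def)

lemma arens_product_multiplicative:
  assumes u: "u \<in> bidual_space" and v: "v \<in> bidual_space" and \<phi>: "\<phi> \<in> dual_space"
    and mult: "\<And>x y. \<phi> (m x y) = \<phi> x * \<phi> y"
  shows "arens_product m u v \<phi> = u \<phi> * v \<phi>"
proof -
  have "(\<lambda>b. v (\<lambda>c. \<phi> (m b c))) = (\<lambda>b. v \<phi> * \<phi> b)"
    using bidual_space_scale[OF v \<phi>] by (simp add: mult mult.commute)
  then have "arens_product m u v \<phi> = v \<phi> * u \<phi>"
    unfolding arens_product_def using bidual_space_scale[OF u \<phi>] by simp
  then show ?thesis by (simp add: mult.commute)
qed

lemma bidual_eq_if_eq_on_characters:
  assumes "separates_bidual TYPE('a::{complex_algebra, topological_space})"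
    and "u \<in> bidual_space" "v \<in> bidual_space"
    and "\<And>\<phi>. \<phi> \<in> (character_space :: ('a \<Rightarrow> complex) set) \<Longrightarrow> u \<phi> = v \<phi>"
    and "f \<in> dual_space"
  shows "u f = v f"
  using assms unfolding separates_bidual_def by blast

text \<open>Both the multiplication and its flip satisfy these axioms, so \<open>\<box>\<close> and \<open>\<diamond>\<close> are
  treated at once.\<close>

locale hypocontinuous_bilinear =
  fixes m :: "'a::{complex_algebra, topological_space} \<Rightarrow> 'a \<Rightarrow> 'a"
  assumes topological_algebra: "topological_algebra TYPE('a)"
    and add_left: "m (x + y) z = m x z + m y z"
    and add_right: "m x (y + z) = m x y + m x z"
    and scaleC_left: "m (c *\<^sub>C x) y = c *\<^sub>C m x y"
    and scaleC_right: "m x (c *\<^sub>C y) = c *\<^sub>C m x y"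
    and continuous_right: "continuous_on UNIV (m x)"
    and hypocontinuous_left:
      "tvs_bounded B \<Longrightarrow> zero_nbhd W \<Longrightarrow> \<exists>V. zero_nbhd V \<and> (\<forall>c\<in>B. \<forall>v\<in>V. m v c \<in> W)"
begin

lemma dual_space_comp_right: "f \<in> dual_space \<Longrightarrow> (\<lambda>c. f (m b c)) \<in> dual_space"
  unfolding dual_space_def clinear_fun_def
  by (auto simp: add_right scaleC_right
      intro!: continuous_on_compose2[OF _ continuous_right] intro: continuous_on_subset)

lemma tvs_bounded_image:
  assumes B1: "tvs_bounded B1" and B2: "tvs_bounded B2"
  shows "tvs_bounded {m b c |b c. b \<in> B1 \<and> c \<in> B2}"
  unfolding tvs_bounded_def
proof (intro allI impI)
  fix W :: "'a set" assume "zero_nbhd W"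
  then obtain V where "zero_nbhd V" and V: "\<forall>c\<in>B2. \<forall>v\<in>V. m v c \<in> W"
    using hypocontinuous_left B2 by blast
  then obtain s where "s > 0" and s: "\<forall>t::real. t > s \<longrightarrow> B1 \<subseteq> (\<lambda>x. complex_of_real t *\<^sub>C x) ` V"
    using B1 unfolding tvs_bounded_def by blast
  have "m b c \<in> (\<lambda>x. complex_of_real t *\<^sub>C x) ` W" if "t > s" "b \<in> B1" "c \<in> B2" for t b c
  proof -
    have "b \<in> (\<lambda>x. complex_of_real t *\<^sub>C x) ` V" using s that by blast
    then obtain v where "v \<in> V" "b = complex_of_real t *\<^sub>C v" by blast
    then show ?thesis using V that by (auto simp: scaleC_left)
  qed
  with \<open>s > 0\<close> show "\<exists>s>0. \<forall>t::real. t > s \<longrightarrow>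
      {m b c |b c. b \<in> B1 \<and> c \<in> B2} \<subseteq> (\<lambda>x. complex_of_real t *\<^sub>C x) ` W"
    by blast
qed

lemma bidual_action_in_dual_space:
  assumes u: "u \<in> bidual_space" and f: "f \<in> dual_space"
  shows "(\<lambda>b. u (\<lambda>c. f (m b c))) \<in> dual_space"
proof -
  have lin: "clinear_fun f" using f unfolding dual_space_def by blast
  have "(\<lambda>c. f (m (x + y) c)) = (\<lambda>c. f (m x c) + f (m y c))"
    and "(\<lambda>c. f (m (s *\<^sub>C x) c)) = (\<lambda>c. s * f (m x c))" for x y s
    using lin unfolding clinear_fun_def by (simp_all add: add_left scaleC_left)
  then have lin_action: "clinear_fun (\<lambda>b. u (\<lambda>c. f (m b c)))"
    unfolding clinear_fun_def
    by (simp add: bidual_space_add[OF u] bidual_space_scale[OF u] dual_space_comp_right[OF f])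
  have "\<exists>V. zero_nbhd V \<and> (\<forall>v\<in>V. cmod (u (\<lambda>c. f (m v c))) < e)" if "e > 0" for e
  proof -
    obtain B d where "tvs_bounded B" "d > 0"
      and Bd: "\<forall>h\<in>dual_space. (\<forall>b\<in>B. cmod (h b) < d) \<longrightarrow> cmod (u h) < e"
      using bidual_space_small_on_bounded[OF u \<open>e > 0\<close>] by blast
    have "open (f -` ball 0 d)"
      using f unfolding dual_space_def by (intro open_vimage) auto
    then have "zero_nbhd (f -` ball 0 d)"
      using \<open>d > 0\<close> clinear_fun_zero[OF lin] unfolding zero_nbhd_def by auto
    then obtain V where "zero_nbhd V" and V: "\<forall>c\<in>B. \<forall>v\<in>V. cmod (f (m v c)) < d"
      using hypocontinuous_left[OF \<open>tvs_bounded B\<close>] by fastforce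
    moreover have "cmod (u (\<lambda>c. f (m v c))) < e" if "v \<in> V" for v
      using Bd[rule_format, OF dual_space_comp_right[OF f]] V that by blast
    ultimately show ?thesis by blast
  qed
  then have "continuous_on UNIV (\<lambda>b. u (\<lambda>c. f (m b c)))"
    by (rule continuous_on_clinear_at_zero[OF topological_algebra lin_action])
  with lin_action show ?thesis unfolding dual_space_def by blast
qed

lemma arens_product_in_bidual_space:
  assumes u: "u \<in> bidual_space" and v: "v \<in> bidual_space"
  shows "arens_product m u v \<in> bidual_space"
proof -
  have add: "arens_product m u v (\<lambda>x. f x + g x) = arens_product m u v f + arens_product m u v g"
    if f: "f \<in> dual_space" and g: "g \<in> dual_space" for f g
    using bidual_space_add[OF u bidual_action_in_dual_space[OF v f] bidual_action_in_dual_space[OF v g]]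
    by (simp add: arens_product_def bidual_space_add[OF v dual_space_comp_right[OF f] dual_space_comp_right[OF g]])
  have scale: "arens_product m u v (\<lambda>x. s * f x) = s * arens_product m u v f"
    if f: "f \<in> dual_space" for f s
    using bidual_space_scale[OF u bidual_action_in_dual_space[OF v f]]
    by (simp add: arens_product_def bidual_space_scale[OF v dual_space_comp_right[OF f]])
  have small: "\<exists>B d. tvs_bounded B \<and> d > 0 \<and>
      (\<forall>h\<in>dual_space. (\<forall>x\<in>B. cmod (h x) < d) \<longrightarrow> cmod (arens_product m u v h) < e)"
    if "e > 0" for e
  proof -
    obtain B1 d1 where B1: "tvs_bounded B1" "d1 > 0"
      and small_u: "\<forall>h\<in>dual_space. (\<forall>b\<in>B1. cmod (h b) < d1) \<longrightarrow> cmod (u h) < e"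
      using bidual_space_small_on_bounded[OF u \<open>e > 0\<close>] by blast
    obtain B2 d2 where B2: "tvs_bounded B2" "d2 > 0"
      and small_v: "\<forall>h\<in>dual_space. (\<forall>c\<in>B2. cmod (h c) < d2) \<longrightarrow> cmod (v h) < d1"
      using bidual_space_small_on_bounded[OF v \<open>d1 > 0\<close>] by blast
    have "cmod (arens_product m u v h) < e"
      if h: "h \<in> dual_space" "\<forall>x\<in>{m b c |b c. b \<in> B1 \<and> c \<in> B2}. cmod (h x) < d2" for h
    proof -
      have "cmod (v (\<lambda>c. h (m b c))) < d1" if "b \<in> B1" for b
      proof -
        have "\<forall>c\<in>B2. cmod (h (m b c)) < d2" using h(2) that by blast
        then show ?thesis using small_v[rule_format, OF dual_space_comp_right[OF h(1)]] by blast
      qed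
      then show ?thesis
        unfolding arens_product_def
        using small_u[rule_format, OF bidual_action_in_dual_space[OF v h(1)]] by blast
    qed
    then show ?thesis
      using tvs_bounded_image[OF B1(1) B2(1)] B2(2)
      by (intro exI[of _ "{m b c |b c. b \<in> B1 \<and> c \<in> B2}"] exI[of _ d2]) blast
  qed
  have "strong_continuous (arens_product m u v)"
    using add small by (rule strong_continuousI_at_zero)
  with add scale show ?thesis unfolding bidual_space_def by blast
qed

lemma arens_square_eq_if_idempotent_on_characters:
  assumes "separates_bidual TYPE('a)" and u: "u \<in> bidual_space"
    and idempotent: "\<And>\<phi>. \<phi> \<in> character_space \<Longrightarrow> u \<phi> * u \<phi> = u \<phi>"
    and multiplicative: "\<And>\<phi> x y. \<phi> \<in> character_space \<Longrightarrow> \<phi> (m x y) = \<phi> x * \<phi> y"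
    and "f \<in> dual_space"
  shows "arens_product m u u f = u f"
proof (rule bidual_eq_if_eq_on_characters[OF assms(1) arens_product_in_bidual_space[OF u u] u _ assms(5)])
  fix \<phi> :: "'a \<Rightarrow> complex" assume \<phi>: "\<phi> \<in> character_space"
  then have "\<phi> \<in> dual_space" by (simp add: character_space_def)
  then have "arens_product m u u \<phi> = u \<phi> * u \<phi>"
    using arens_product_multiplicative[of u u \<phi> m] u multiplicative[OF \<phi>] by blast
  then show "arens_product m u u \<phi> = u \<phi>" using idempotent[OF \<phi>] by simp
qed

end

lemma hypocontinuous_bilinear_mult:
  assumes "topological_algebra TYPE('a::{complex_algebra, topological_space})"
    and "hypocontinuous_mult TYPE('a)"
  shows "hypocontinuous_bilinear ((*) :: 'a \<Rightarrow> 'a \<Rightarrow> 'a)"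
proof unfold_locales
  show "continuous_on UNIV ((*) x)" for x :: 'a
    using assms(1) unfolding topological_algebra_def by blast
  show "\<exists>V. zero_nbhd V \<and> (\<forall>c\<in>B. \<forall>v\<in>V. v * c \<in> W)"
    if "tvs_bounded B" "zero_nbhd W" for B W :: "'a set"
    using assms(2) that unfolding hypocontinuous_mult_def by meson
qed (simp_all add: assms(1) distrib_left distrib_right mult_scaleC_left mult_scaleC_right)

lemma hypocontinuous_bilinear_mult_flip:
  assumes "topological_algebra TYPE('a::{complex_algebra, topological_space})"
    and "hypocontinuous_mult TYPE('a)"
  shows "hypocontinuous_bilinear (\<lambda>x y :: 'a. y * x)"
proof unfold_locales
  show "continuous_on UNIV (\<lambda>y. y * x)" for x :: 'a
    using assms(1) unfolding topological_algebra_def by blast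
  show "\<exists>V. zero_nbhd V \<and> (\<forall>c\<in>B. \<forall>v\<in>V. c * v \<in> W)"
    if "tvs_bounded B" "zero_nbhd W" for B W :: "'a set"
    using assms(2) that unfolding hypocontinuous_mult_def by meson
qed (simp_all add: assms(1) distrib_left distrib_right mult_scaleC_left mult_scaleC_right)

theorem mainTheorem14:
  fixes a :: "'i \<Rightarrow> 'a::{complex_algebra, topological_space}"
    and F :: "'i filter"
    and u :: "('a \<Rightarrow> complex) \<Rightarrow> complex"
  assumes "topological_algebra TYPE('a)"
    and "hypocontinuous_mult TYPE('a)"
    and "separates_bidual TYPE('a)"
    and "F \<noteq> bot"
    and "\<forall>i. a i * a i = a i"
    and "u \<in> bidual_space"
    and "\<forall>f\<in>dual_space. ((\<lambda>i. f (a i)) \<longlongrightarrow> u f) F"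
  shows "\<forall>f\<in>dual_space. arens_first u u f = u f \<and> arens_second u u f = u f"
proof -
  interpret mult: hypocontinuous_bilinear "(*) :: 'a \<Rightarrow> 'a \<Rightarrow> 'a"
    using hypocontinuous_bilinear_mult[OF assms(1,2)] .
  interpret flip: hypocontinuous_bilinear "\<lambda>x y :: 'a. y * x"
    using hypocontinuous_bilinear_mult_flip[OF assms(1,2)] .
  have multiplicative: "\<phi> (x * y) = \<phi> x * \<phi> y" if "\<phi> \<in> character_space" for \<phi> x y
    using that by (simp add: character_space_def)
  have multiplicative_flip: "\<phi> (y * x) = \<phi> x * \<phi> y" if "\<phi> \<in> character_space" for \<phi> x y
    using multiplicative[OF that, of y x] by (simp only: mult.commute)
  have idempotent: "u \<phi> * u \<phi> = u \<phi>" if \<phi>: "\<phi> \<in> character_space" for \<phi>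
  proof (rule tendsto_idempotent)
    show "((\<lambda>i. \<phi> (a i)) \<longlongrightarrow> u \<phi>) F" using assms(7) \<phi> by (simp add: character_space_def)
    show "\<phi> (a i) * \<phi> (a i) = \<phi> (a i)" for i
      using assms(5) multiplicative[OF \<phi>, of "a i" "a i"] by simp
  qed (rule assms(4))
  show ?thesis
    unfolding arens_first_eq_arens_product arens_second_eq_arens_product
    using mult.arens_square_eq_if_idempotent_on_characters[OF assms(3,6) idempotent multiplicative]
      flip.arens_square_eq_if_idempotent_on_characters[OF assms(3,6) idempotent multiplicative_flip]
    by blast
qed

end
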